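(* Let $k$ be a field of characteristic not $2$ or $3$, let $n\ge2$, let $\mathcal{A}\in k^{n+1}\otimes\operatorname{Sym}_2k^3$, and let $X=Z(\det\mathcal{A}(\mathbf{x},\cdot,\cdot))\subseteq\mathbb{P}^n$ be the associated symmetroid hypersurface of degree $3$. If the Cayley variety of $\mathcal{A}$ is non-empty, then $X$ contains a linear subspace of $\mathbb{P}^n$ of dimension at least $n-2$, along which $X$ is singular.
   Context: $\mathcal{A}$ is viewed as an $(n+1)$-tuple $(A_0,\dots,A_n)$ of symmetric $3\times3$ matrices, $\mathcal{A}(\mathbf{x},\cdot,\cdot)=\sum x_iA_i$, and the Cayley variety is $Z(\mathbf{y}^TA_0\mathbf{y},\dots,\mathbf{y}^TA_n\mathbf{y})\subseteq\mathbb{P}^2$. *)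

theory Defs
  imports "HOL-Analysis.Analysis" "HOL-Computational_Algebra.Polynomial"
begin

text \<open>The pencil A(x,.,.) = sum_i x_i A_i of symmetric 3x3 matrices, for x in k^(n+1)
  (the index type 'n has n+1 elements).\<close>
definition pencil :: "('n::finite \<Rightarrow> 'a::field^3^3) \<Rightarrow> 'a^'n \<Rightarrow> 'a^3^3" where
  "pencil A x = (\<chi> i j. \<Sum>k\<in>UNIV. x $ k * (A k $ i $ j))"

definition quad_form :: "'a::comm_ring_1^3^3 \<Rightarrow> 'a^3 \<Rightarrow> 'a" where
  "quad_form M y = (\<Sum>j\<in>UNIV. y $ j * (M *v y) $ j)"

definition cayley_nonempty :: "('n::finite \<Rightarrow> 'a::field^3^3) \<Rightarrow> bool" where
  "cayley_nonempty A \<longleftrightarrow> (\<exists>y::'a^3. y \<noteq> 0 \<and> (\<forall>i. quad_form (A i) y = 0))"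

definition symmetroid_eq :: "('n::finite \<Rightarrow> 'a::field^3^3) \<Rightarrow> 'a^'n \<Rightarrow> 'a" where
  "symmetroid_eq A x = det (pencil A x)"

text \<open>Directional derivative of f at x in direction v: the coefficient of t in the
  polynomial t \<mapsto> det A(x + t v) = det (A(x) + t A(v)) (formal derivative, valid over any field).\<close>
definition symmetroid_dir_deriv :: "('n::finite \<Rightarrow> 'a::field^3^3) \<Rightarrow> 'a^'n \<Rightarrow> 'a^'n \<Rightarrow> 'a" where
  "symmetroid_dir_deriv A x v =
     coeff (det (\<chi> i j. [: pencil A x $ i $ j, pencil A v $ i $ j :])) 1"

text \<open>x (a representative of a point of P^n) is a singular point of X = Z(f):
  f(x) = 0 and all partial derivatives of f vanish at x (equivalently all directional derivatives).\<close>
definition symmetroid_singular_at :: "('n::finite \<Rightarrow> 'a::field^3^3) \<Rightarrow> 'a^'n \<Rightarrow> bool" where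
  "symmetroid_singular_at A x \<longleftrightarrow>
     symmetroid_eq A x = 0 \<and> (\<forall>v. symmetroid_dir_deriv A x v = 0)"

end

theory Submission
  imports Defs
begin

text \<open>Fix \<open>y \<noteq> 0\<close> with \<open>y\<^sup>T A\<^sub>i y = 0\<close> for all i, and let L be the linear space
  of all x with \<open>A(x) y = 0\<close>. Since \<open>y\<^sup>T A(x) y = 0\<close>, the linear map \<open>x \<mapsto> A(x) y\<close>
  takes values in the hyperplane \<open>y\<^sup>T w = 0\<close> of \<open>k\<^sup>3\<close>, so L has codimension at most 2.
  For x in L the matrix \<open>A(x)\<close> is singular, and the derivative of det in direction v is the
  pairing of \<open>A(v)\<close> with the adjugate of \<open>A(x)\<close>. That adjugate is a multiple of \<open>y y\<^sup>T\<close>,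
  so the pairing is a multiple of \<open>y\<^sup>T A(v) y = 0\<close>: X is singular along L.\<close>

lemma dim_le_dim_Int_hyperplane:
  fixes g :: "'a::field^'n \<Rightarrow> 'a"
  assumes S: "vec.subspace S" and g: "Vector_Spaces.linear (*s) (*) g"
  shows "vec.dim S \<le> vec.dim (S \<inter> {x. g x = 0}) + 1"
proof (cases "\<forall>x\<in>S. g x = 0")
  case True
  then show ?thesis by (simp add: Int_absorb2 subsetI)
next
  case False
  interpret g: Vector_Spaces.linear "(*s)" "(*)" g by (fact g)
  obtain w where w: "w \<in> S" "g w \<noteq> 0" using False by auto
  define H where "H = S \<inter> {x. g x = 0}"
  have "S \<subseteq> vec.span (insert w H)"
  proof
    fix x assume x: "x \<in> S"
    define c where "c = g x / g w"
    have "x - c *s w \<in> H"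
      using S x w by (simp add: H_def c_def g.diff g.scale vec.subspace_diff vec.subspace_scale)
    then have "(x - c *s w) + c *s w \<in> vec.span (insert w H)"
      by (intro vec.span_add) (simp_all add: vec.span_base vec.span_scale)
    then show "x \<in> vec.span (insert w H)" by simp
  qed
  then have "vec.dim S \<le> vec.dim (insert w H)"
    using vec.dim_subset vec.dim_span by metis
  also have "\<dots> \<le> vec.dim H + 1" by (simp add: vec.dim_insert)
  finally show ?thesis unfolding H_def .
qed

lemma dim_le_dim_Int_common_zeros:
  fixes g :: "'i \<Rightarrow> 'a::field^'n \<Rightarrow> 'a"
  assumes "finite I" and S: "vec.subspace S"
    and g: "\<And>i. i \<in> I \<Longrightarrow> Vector_Spaces.linear (*s) (*) (g i)"
  shows "vec.dim S \<le> vec.dim (S \<inter> {x. \<forall>i\<in>I. g i x = 0}) + card I"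
  using assms(1) g
proof (induction I rule: finite_induct)
  case empty
  then show ?case by simp
next
  case (insert i I)
  define T where "T = S \<inter> {x. \<forall>j\<in>I. g j x = 0}"
  have "vec.subspace {x. \<forall>j\<in>I. g j x = 0}"
    using insert.prems unfolding vec.subspace_def
    by (auto simp: Vector_Spaces.linear_iff) (metis vector_smult_lzero mult_zero_left)
  then have "vec.subspace T" unfolding T_def using S by (rule vec.subspace_inter[rotated])
  then have "vec.dim T \<le> vec.dim (T \<inter> {x. g i x = 0}) + 1"
    by (rule dim_le_dim_Int_hyperplane) (simp add: insert.prems)
  moreover have "T \<inter> {x. g i x = 0} = S \<inter> {x. \<forall>j\<in>insert i I. g j x = 0}"
    unfolding T_def by auto
  ultimately show ?case
    using insert.IH insert.prems insert.hyps by (simp add: T_def)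
qed

lemma linear_vec_nth: "Vector_Spaces.linear (*s) (*) (\<lambda>v::'a::field^'m. v $ l)"
  by (simp add: Vector_Spaces.linear_iff vec.vector_space_axioms
      vector_space_over_itself.vector_space_axioms)

lemma card_le_dim_kernel_if_image_in_hyperplane:
  fixes f :: "'a::field^'n \<Rightarrow> 'a^'m" and c :: "'a^'m"
  assumes f: "Vector_Spaces.linear (*s) (*s) f" and "c \<noteq> 0"
    and image_in_hyperplane: "\<And>x. (\<Sum>l\<in>UNIV. c $ l * f x $ l) = 0"
  shows "CARD('n) + 1 \<le> vec.dim {x. f x = 0} + CARD('m)"
proof -
  obtain k where k: "c $ k \<noteq> 0" using \<open>c \<noteq> 0\<close> by (auto simp: vec_eq_iff)
  have kernel: "{x. f x = 0} = {x. \<forall>l\<in>-{k}. f x $ l = 0}"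
  proof (intro Collect_cong iffI)
    fix x assume others: "\<forall>l\<in>-{k}. f x $ l = 0"
    have "c $ k * f x $ k = (\<Sum>l\<in>UNIV. c $ l * f x $ l)"
      using others by (simp add: sum.remove[of UNIV k] Compl_eq_Diff_UNIV)
    then have "f x $ k = 0" using k image_in_hyperplane by simp
    with others show "f x = 0" by (metis ComplI singletonD vec_eq_iff zero_index)
  qed simp
  have "CARD('n) \<le> vec.dim {x. \<forall>l\<in>-{k}. f x $ l = 0} + card (-{k})"
    using dim_le_dim_Int_common_zeros[of "-{k}" UNIV "\<lambda>l x. f x $ l"]
      Vector_Spaces.linear_compose[OF f linear_vec_nth]
    by (simp add: card_cart_basis o_def)
  moreover have "card (-{k}) + 1 = CARD('m)"
    by (simp add: Compl_eq_Diff_UNIV card_Diff_singleton)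
  ultimately show ?thesis using kernel by simp
qed

lemma transpose_eq_self_nth:
  assumes "transpose X = X"
  shows "X$i$j = X$j$i"
proof -
  have "X$i$j = transpose X $ i $ j" using assms by simp
  then show ?thesis by (simp add: transpose_def)
qed

lemma coeff_linear_product_3:
  "coeff ([:a\<^sub>1, b\<^sub>1:] * [:a\<^sub>2, b\<^sub>2:] * [:a\<^sub>3, b\<^sub>3:]) 1
     = b\<^sub>1*a\<^sub>2*a\<^sub>3 + a\<^sub>1*b\<^sub>2*a\<^sub>3 + a\<^sub>1*a\<^sub>2*(b\<^sub>3::'a::comm_ring_1)"
  by (simp add: algebra_simps)

text \<open>Since \<open>M y = 0\<close> for \<open>M = (a b c; b d e; c e f)\<close>, its cofactor matrix P satisfies
  \<open>y\<^sub>k\<^sup>2 P = P\<^sub>k\<^sub>k y y\<^sup>T\<close>; hence pairing \<open>N = (p q r; q s t; r t u)\<close> with P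
  gives a multiple of \<open>y\<^sup>T N y\<close>.\<close>
lemma cofactor_pairing_eq_0:
  fixes a b c d e f p q r s t u y\<^sub>1 y\<^sub>2 y\<^sub>3 :: "'a::idom"
  assumes kernel: "a*y\<^sub>1 + b*y\<^sub>2 + c*y\<^sub>3 = 0" "b*y\<^sub>1 + d*y\<^sub>2 + e*y\<^sub>3 = 0" "c*y\<^sub>1 + e*y\<^sub>2 + f*y\<^sub>3 = 0"
    and quadric: "p*y\<^sub>1\<^sup>2 + s*y\<^sub>2\<^sup>2 + u*y\<^sub>3\<^sup>2 + 2*q*y\<^sub>1*y\<^sub>2 + 2*r*y\<^sub>1*y\<^sub>3 + 2*t*y\<^sub>2*y\<^sub>3 = 0"
    and nonzero: "y\<^sub>1 \<noteq> 0 \<or> y\<^sub>2 \<noteq> 0 \<or> y\<^sub>3 \<noteq> 0"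
  shows "p*(d*f - e\<^sup>2) + s*(a*f - c\<^sup>2) + u*(a*d - b\<^sup>2)
       + 2*q*(c*e - b*f) + 2*r*(b*e - c*d) + 2*t*(b*c - a*e) = 0" (is "?pairing = 0")
proof -
  let ?Q = "p*y\<^sub>1\<^sup>2 + s*y\<^sub>2\<^sup>2 + u*y\<^sub>3\<^sup>2 + 2*q*y\<^sub>1*y\<^sub>2 + 2*r*y\<^sub>1*y\<^sub>3 + 2*t*y\<^sub>2*y\<^sub>3"
  have "y\<^sub>1\<^sup>2 * ?pairing = (d*f - e\<^sup>2) * ?Q"
    and "y\<^sub>2\<^sup>2 * ?pairing = (a*f - c\<^sup>2) * ?Q"
    and "y\<^sub>3\<^sup>2 * ?pairing = (a*d - b\<^sup>2) * ?Q"
    using kernel by algebra+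
  then show ?thesis using quadric nonzero by auto
qed

lemma coeff_det_linear_pencil_eq_0:
  fixes M N :: "'a::idom^3^3"
  assumes "transpose M = M" "transpose N = N"
    and "M *v y = 0" "y \<noteq> 0" "quad_form N y = 0"
  shows "coeff (det (\<chi> i j. [:M$i$j, N$i$j:])) 1 = 0"
proof -
  note symmetric = transpose_eq_self_nth[OF assms(1)] transpose_eq_self_nth[OF assms(2)]
  note sym_entries = symmetric[of 2 1] symmetric[of 3 1] symmetric[of 3 2]
  have "coeff (det (\<chi> i j. [:M$i$j, N$i$j:])) 1 =
      N$1$1*(M$2$2*M$3$3 - (M$2$3)\<^sup>2) + N$2$2*(M$1$1*M$3$3 - (M$1$3)\<^sup>2) + N$3$3*(M$1$1*M$2$2 - (M$1$2)\<^sup>2)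
    + 2*N$1$2*(M$1$3*M$2$3 - M$1$2*M$3$3) + 2*N$1$3*(M$1$2*M$2$3 - M$1$3*M$2$2)
    + 2*N$2$3*(M$1$2*M$1$3 - M$1$1*M$2$3)"
    unfolding det_3 vec_lambda_beta coeff_add coeff_diff coeff_linear_product_3 sym_entries
    by algebra
  also have "\<dots> = 0"
  proof (rule cofactor_pairing_eq_0)
    have "(M *v y)$1 = 0" "(M *v y)$2 = 0" "(M *v y)$3 = 0" using assms(3) by simp_all
    then show "M$1$1*y$1 + M$1$2*y$2 + M$1$3*y$3 = 0" "M$1$2*y$1 + M$2$2*y$2 + M$2$3*y$3 = 0"
      "M$1$3*y$1 + M$2$3*y$2 + M$3$3*y$3 = 0"
      unfolding matrix_vector_mult_def vec_lambda_beta sum_3 sym_entries .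
    have "quad_form N y = N$1$1*(y$1)\<^sup>2 + N$2$2*(y$2)\<^sup>2 + N$3$3*(y$3)\<^sup>2
        + 2*N$1$2*y$1*y$2 + 2*N$1$3*y$1*y$3 + 2*N$2$3*y$2*y$3"
      unfolding quad_form_def matrix_vector_mult_def vec_lambda_beta sum_3 sym_entries by algebra
    then show "N$1$1*(y$1)\<^sup>2 + N$2$2*(y$2)\<^sup>2 + N$3$3*(y$3)\<^sup>2
        + 2*N$1$2*y$1*y$2 + 2*N$1$3*y$1*y$3 + 2*N$2$3*y$2*y$3 = 0"
      using assms(5) by simp
    show "y$1 \<noteq> 0 \<or> y$2 \<noteq> 0 \<or> y$3 \<noteq> 0"
      using assms(4) by (metis exhaust_3 vec_eq_iff zero_index)
  qed
  finally show ?thesis .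
qed

lemma pencil_mult_vec: "pencil A x *v y = (\<Sum>k\<in>UNIV. x $ k *s (A k *v y))"
proof -
  have "(pencil A x *v y) $ l = (\<Sum>k\<in>UNIV. x $ k * (A k *v y) $ l)" for l
    unfolding pencil_def matrix_vector_mult_def vec_lambda_beta sum_distrib_left sum_distrib_right
    by (subst sum.swap) (simp add: mult.assoc)
  then show ?thesis by (simp add: vec_eq_iff sum_component)
qed

lemma linear_pencil_mult_vec: "Vector_Spaces.linear (*s) (*s) (\<lambda>x. pencil A x *v y)"
  unfolding pencil_mult_vec Vector_Spaces.linear_iff
  by (simp add: vec.vector_space_axioms vector_sadd_rdistrib sum.distrib vec.scale_sum_right)

lemma quad_form_pencil: "quad_form (pencil A x) y = (\<Sum>k\<in>UNIV. x $ k * quad_form (A k) y)"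
  unfolding quad_form_def pencil_mult_vec sum_component vector_smult_component sum_distrib_left
  by (subst sum.swap) (simp add: mult.left_commute)

lemma transpose_pencil:
  assumes "\<forall>i. transpose (A i) = A i"
  shows "transpose (pencil A x) = pencil A x"
  using transpose_eq_self_nth assms by (simp add: vec_eq_iff transpose_def pencil_def)

lemma symmetroid_singular_at_if_pencil_kernel:
  assumes "\<forall>i. transpose (A i) = A i" and "y \<noteq> 0" and "\<forall>i. quad_form (A i) y = 0"
    and "pencil A x *v y = 0"
  shows "symmetroid_singular_at A x"
  unfolding symmetroid_singular_at_def symmetroid_eq_def symmetroid_dir_deriv_def
proof (intro conjI allI)
  show "det (pencil A x) = 0"
    using assms(2,4) inj_matrix_vector_mult invertible_det_nz vec.inj_iff_eq_0 by blast
  fix v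
  show "coeff (det (\<chi> i j. [:pencil A x $ i $ j, pencil A v $ i $ j:])) 1 = 0"
    using coeff_det_linear_pencil_eq_0[OF transpose_pencil[OF assms(1)]
        transpose_pencil[OF assms(1)] assms(4,2)] assms(3)
    by (simp add: quad_form_pencil)
qed

theorem lemma4p0p8:
  fixes A :: "'n::finite \<Rightarrow> 'a::field^3^3"
  assumes "CARD('n) \<ge> 3"
    and "CHAR('a) \<noteq> 2" and "CHAR('a) \<noteq> 3"
    and "\<forall>i. transpose (A i) = A i"
    and "cayley_nonempty A"
  shows "\<exists>L. vec.subspace L \<and> CARD('n) \<le> vec.dim L + 2 \<and>
             (\<forall>x\<in>L. symmetroid_eq A x = 0 \<and> symmetroid_singular_at A x)"
proof -
  obtain y :: "'a^3" where "y \<noteq> 0" and cayley_point: "\<forall>i. quad_form (A i) y = 0"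
    using assms(5) unfolding cayley_nonempty_def by blast
  let ?L = "{x. pencil A x *v y = 0}"
  have "vec.subspace ?L"
    using vec.linear_subspace_kernel[OF linear_pencil_mult_vec] .
  moreover have "CARD('n) + 1 \<le> vec.dim ?L + CARD(3)"
    using cayley_point
    by (intro card_le_dim_kernel_if_image_in_hyperplane[OF linear_pencil_mult_vec \<open>y \<noteq> 0\<close>])
      (simp add: quad_form_pencil flip: quad_form_def)
  moreover have "symmetroid_singular_at A x" if "x \<in> ?L" for x
    using symmetroid_singular_at_if_pencil_kernel[OF assms(4) \<open>y \<noteq> 0\<close> cayley_point] that by simp
  ultimately show ?thesis
    unfolding symmetroid_singular_at_def by (intro exI[of _ ?L]) auto
qed

end
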